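(* Let $K,L$ be (not necessarily associative) rings with identity, let $q\colon K\to L$ be a multiplicative quadratic map with $f(a,b)=q(a+b)-q(a)-q(b)$, and let $a\in K$ satisfy $f(a,b)=0$ for all $b\in K$. Then: (1) $q(a)f(b,c)=f(b,c)q(a)=0$ for all $b,c\in K$; (2) if $q(a)$ is not a zero-divisor (in particular $q(a)\neq 0$), then $\operatorname{char}L=2$ and $q$ is a ring homomorphism.
   Context: A map $q\colon K\to L$ between rings with identity is called a multiplicative quadratic map if (i) $q(ab)=q(a)q(b)$ for all $a,b\in K$; (ii) $q(n\cdot 1_K)=n^2\cdot 1_L$ for all $n\in\mathbb{Z}$; (iii) the map $f\colon K\times K\to L$, $f(a,b)=q(a+b)-q(a)-q(b)$, is biadditive. *)

theory Defs
  imports Main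
begin

class nonassoc_ring_1 = ab_group_add + times + one +
  assumes nar_distrib_right: "(a + b) * c = a * c + b * c"
    and nar_distrib_left: "a * (b + c) = a * b + a * c"
    and nar_mult_1_left: "1 * a = a"
    and nar_mult_1_right: "a * 1 = a"

definition zmult :: "int \<Rightarrow> 'a::ab_group_add \<Rightarrow> 'a" where
  "zmult n x = (if 0 \<le> n then (\<Sum>i<nat n. x) else - (\<Sum>i<nat (- n). x))"

definition ring_char :: "'a::nonassoc_ring_1 itself \<Rightarrow> nat" where
  "ring_char _ = (if \<exists>n>0. zmult (int n) (1::'a) = 0
                  then (LEAST n. n > 0 \<and> zmult (int n) (1::'a) = 0) else 0)"

definition mult_quadratic_map :: "('a::nonassoc_ring_1 \<Rightarrow> 'b::nonassoc_ring_1) \<Rightarrow> bool" where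
  "mult_quadratic_map q \<longleftrightarrow>
     (\<forall>a b. q (a * b) = q a * q b) \<and>
     (\<forall>n::int. q (zmult n 1) = zmult (n^2) 1) \<and>
     (\<forall>a a' b. q (a + a' + b) - q (a + a') - q b
               = (q (a + b) - q a - q b) + (q (a' + b) - q a' - q b)) \<and>
     (\<forall>a b b'. q (a + (b + b')) - q a - q (b + b')
               = (q (a + b) - q a - q b) + (q (a + b') - q a - q b'))"

definition zero_divisor :: "'a::nonassoc_ring_1 \<Rightarrow> bool" where
  "zero_divisor x \<longleftrightarrow> x = 0 \<or> (\<exists>y. y \<noteq> 0 \<and> (x * y = 0 \<or> y * x = 0))"

definition ring_hom_map :: "('a::nonassoc_ring_1 \<Rightarrow> 'b::nonassoc_ring_1) \<Rightarrow> bool" where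
  "ring_hom_map q \<longleftrightarrow> (\<forall>a b. q (a + b) = q a + q b) \<and> (\<forall>a b. q (a * b) = q a * q b) \<and> q 1 = 1"

end

theory Submission
  imports Defs
begin

text \<open>
  Multiplicativity gives \<open>q x * f b c = f (x b) (x c)\<close> and
  \<open>f b c * q x = f (b x) (c x)\<close>. Since \<open>a\<close> lies in the radical of \<open>f\<close>,
  \<open>q\<close> is additive at \<open>a\<close>; expanding \<open>q (a + y) * f 1 c = f (a + y) ((a + y) c)\<close>
  both ways then shows that \<open>a c\<close>, and symmetrically \<open>c a\<close>, lie in the radical too,
  which is part (1). If \<open>q a\<close> is not a zero-divisor, (1) forces \<open>f = 0\<close>, so
  \<open>q\<close> is additive, and comparing \<open>q (1 + 1) = 2\<close> with \<open>q (2 \<cdot> 1) = 4 \<cdot> 1\<close>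
  gives \<open>1 + 1 = 0\<close>.
\<close>

context nonassoc_ring_1
begin

lemma nar_mult_zero_right: "a * 0 = 0"
proof -
  have "a * 0 = a * 0 + a * 0" using nar_distrib_left[of a 0 0] by simp
  thus ?thesis by simp
qed

lemma nar_right_diff_distrib: "a * (b - c) = a * b - a * c"
proof -
  have "a * (b - c) + a * c = a * b" using nar_distrib_left[of a "b - c" c] by simp
  thus ?thesis by (simp add: eq_diff_eq)
qed

lemma nar_left_diff_distrib: "(b - c) * a = b * a - c * a"
proof -
  have "(b - c) * a + c * a = b * a" using nar_distrib_right[of "b - c" c a] by simp
  thus ?thesis by (simp add: eq_diff_eq)
qed

end

lemma zmult_of_nat: "zmult (int n) x = (\<Sum>i<n. x)"
  by (simp add: zmult_def)

lemma zmult_2: "zmult 2 x = x + x"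
  by (simp add: zmult_def numeral_2_eq_2)

lemma zmult_4: "zmult 4 x = x + x + x + x"
proof -
  have "zmult 4 x = (\<Sum>i<Suc (Suc (Suc (Suc 0))). x)"
    using zmult_of_nat[of 4 x] by (simp add: numeral_eq_Suc)
  thus ?thesis by (simp add: add.assoc)
qed

lemma ring_char_eq_2:
  assumes "(1::'a::nonassoc_ring_1) + 1 = 0" and "(1::'a) \<noteq> 0"
  shows "ring_char TYPE('a) = 2"
proof -
  have two: "zmult (int 2) (1::'a) = 0"
    using assms(1) by (simp add: zmult_2)
  have "(LEAST n. n > 0 \<and> zmult (int n) (1::'a) = 0) = 2"
  proof (rule Least_equality)
    fix n :: nat assume "n > 0 \<and> zmult (int n) (1::'a) = 0"
    with assms(2) show "2 \<le> n" by (cases "n = 1") (auto simp: zmult_def)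
  qed (use two in simp)
  with two show ?thesis unfolding ring_char_def by (metis zero_less_numeral)
qed

lemma not_zero_divisor_mult_eq_0:
  assumes "\<not> zero_divisor x" and "x * y = 0 \<or> y * x = 0"
  shows "y = 0"
  using assms unfolding zero_divisor_def by blast

lemma not_zero_divisor_one_neq_zero:
  assumes "\<not> zero_divisor (x::'a::nonassoc_ring_1)"
  shows "(1::'a) \<noteq> 0"
proof
  assume "(1::'a) = 0"
  hence "x = 0" using nar_mult_1_right[of x] nar_mult_zero_right[of x] by simp
  with assms show False unfolding zero_divisor_def by simp
qed

definition polar :: "('a::ab_group_add \<Rightarrow> 'b::ab_group_add) \<Rightarrow> 'a \<Rightarrow> 'a \<Rightarrow> 'b" where
  "polar q x y = q (x + y) - q x - q y"

lemma polar_commute: "polar q x y = polar q y x"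
  unfolding polar_def by (simp add: add.commute algebra_simps)

lemma polar_eq_0_iff: "polar q x y = 0 \<longleftrightarrow> q (x + y) = q x + q y"
  unfolding polar_def by (simp add: algebra_simps)

lemma polar_mult_left:
  fixes q :: "'a::nonassoc_ring_1 \<Rightarrow> 'b::nonassoc_ring_1"
  assumes "\<And>x y. q (x * y) = q x * q y"
  shows "q x * polar q b c = polar q (x * b) (x * c)"
  unfolding polar_def by (simp add: nar_distrib_left[symmetric] assms nar_right_diff_distrib)

lemma polar_mult_right:
  fixes q :: "'a::nonassoc_ring_1 \<Rightarrow> 'b::nonassoc_ring_1"
  assumes "\<And>x y. q (x * y) = q x * q y"
  shows "polar q b c * q x = polar q (b * x) (c * x)"
  unfolding polar_def by (simp add: nar_distrib_right[symmetric] assms nar_left_diff_distrib)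

context
  fixes q :: "'a::nonassoc_ring_1 \<Rightarrow> 'b::nonassoc_ring_1"
  assumes q: "mult_quadratic_map q"
begin

lemma mult_quadratic_map_mult: "q (x * y) = q x * q y"
  using q unfolding mult_quadratic_map_def by blast

lemma mult_quadratic_map_zmult: "q (zmult n 1) = zmult (n^2) 1"
  using q unfolding mult_quadratic_map_def by blast

lemma polar_add_left: "polar q (x + x') y = polar q x y + polar q x' y"
  using q unfolding mult_quadratic_map_def polar_def by blast

lemma polar_add_right: "polar q x (y + y') = polar q x y + polar q x y'"
  using q unfolding mult_quadratic_map_def polar_def by blast

lemma mult_quadratic_map_one: "q 1 = 1"
  using mult_quadratic_map_zmult[of 1] by (simp add: zmult_def)

lemma polar_radical_mult_right:
  assumes rad: "\<And>y. polar q a y = 0"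
  shows "polar q y (a * c) = 0"
proof -
  have "q (a + y) * polar q 1 c = polar q a (a * c) + polar q a (y * c)
          + polar q y (a * c) + polar q y (y * c)"
    by (simp add: polar_mult_left[OF mult_quadratic_map_mult] nar_distrib_right
        polar_add_left polar_add_right nar_mult_1_right algebra_simps)
  moreover have "q (a + y) * polar q 1 c = polar q a (a * c) + polar q y (y * c)"
    using rad[of y] by (simp add: polar_eq_0_iff nar_distrib_right
        polar_mult_left[OF mult_quadratic_map_mult] nar_mult_1_right)
  ultimately show ?thesis
    using rad by (simp add: polar_add_left polar_add_right algebra_simps)
qed

lemma polar_radical_mult_left:
  assumes rad: "\<And>y. polar q a y = 0"
  shows "polar q y (c * a) = 0"
proof -
  have "polar q 1 c * q (y + a) = polar q y (c * y) + polar q y (c * a)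
          + polar q a (c * y) + polar q a (c * a)"
    by (simp add: polar_mult_right[OF mult_quadratic_map_mult] nar_distrib_left
        polar_add_left polar_add_right nar_mult_1_left algebra_simps)
  moreover have "polar q 1 c * q (y + a) = polar q y (c * y) + polar q a (c * a)"
    using rad[of y] by (simp add: polar_eq_0_iff polar_commute[of q a] nar_distrib_left
        polar_mult_right[OF mult_quadratic_map_mult] nar_mult_1_left add.commute)
  ultimately show ?thesis
    using rad by (simp add: polar_add_left polar_add_right algebra_simps)
qed

lemma polar_radical_annihilates:
  assumes "\<And>y. polar q a y = 0"
  shows "q a * polar q b c = 0 \<and> polar q b c * q a = 0"
  using polar_radical_mult_right[OF assms] polar_radical_mult_left[OF assms]
  by (simp add: polar_mult_left[OF mult_quadratic_map_mult]
      polar_mult_right[OF mult_quadratic_map_mult])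

lemma additive_mult_quadratic_map_char_2:
  assumes add: "\<And>x y. q (x + y) = q x + q y" and nontrivial: "(1::'b) \<noteq> 0"
  shows "ring_char TYPE('b) = 2 \<and> ring_hom_map q"
proof
  have "q (1 + 1) = (1::'b) + 1 + 1 + 1"
    using mult_quadratic_map_zmult[of 2] by (simp add: zmult_2 zmult_4)
  moreover have "q (1 + 1) = (1::'b) + 1"
    using add mult_quadratic_map_one by simp
  ultimately have "(1::'b) + 1 = 0" by (simp add: algebra_simps)
  thus "ring_char TYPE('b) = 2" using nontrivial by (rule ring_char_eq_2)
  show "ring_hom_map q"
    unfolding ring_hom_map_def using add mult_quadratic_map_mult mult_quadratic_map_one by simp
qed

end

theorem lemma2p2:
  fixes q :: "'a::nonassoc_ring_1 \<Rightarrow> 'b::nonassoc_ring_1" and a :: 'a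
  defines "f \<equiv> (\<lambda>x y. q (x + y) - q x - q y)"
  assumes "mult_quadratic_map q"
    and "\<forall>b. f a b = 0"
  shows "(\<forall>b c. q a * f b c = 0 \<and> f b c * q a = 0)
       \<and> (\<not> zero_divisor (q a) \<longrightarrow> ring_char TYPE('b) = 2 \<and> ring_hom_map q)"
proof -
  have f: "f = polar q" unfolding f_def polar_def by (intro ext) simp
  have rad: "\<And>y. polar q a y = 0" using assms(3) f by simp
  have annihilates: "\<And>b c. q a * polar q b c = 0 \<and> polar q b c * q a = 0"
    using polar_radical_annihilates[OF assms(2) rad] .
  moreover have "ring_char TYPE('b) = 2 \<and> ring_hom_map q" if nzd: "\<not> zero_divisor (q a)"
  proof (rule additive_mult_quadratic_map_char_2[OF assms(2)])
    fix x y
    have "polar q x y = 0" using annihilates nzd not_zero_divisor_mult_eq_0 by blast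
    thus "q (x + y) = q x + q y" by (simp add: polar_eq_0_iff)
  next
    show "(1::'b) \<noteq> 0" using nzd by (rule not_zero_divisor_one_neq_zero)
  qed
  ultimately show ?thesis unfolding f by blast
qed

end
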